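(* Let $S=(n,\phi,F)$ be a semicoherent system whose lifetime distribution has no ties. Then for every $j\in[n]$, $$I_{\mathrm{BP}}^{(j)}=\sum_{A\subseteq[n]\setminus\{j\}}r_j(A)\,m_\phi(A\cup\{j\}).$$
   Context: Semicoherent system $S=(n,\phi,F)$: $\phi:2^{[n]}\to\{0,1\}$ nondecreasing (subsets identified with Boolean vectors), $\phi(\varnothing)=0$, $\phi([n])=1$; $F$ is the joint c.d.f. of nonnegative component lifetimes $X_1,\ldots,X_n$ with $\Pr(X_i=X_k)=0$ for $i\neq k$. System lifetime $T=\inf\{t\geq0:\phi(\{i:X_i>t\})=0\}$, and $I_{\mathrm{BP}}^{(j)}=\Pr(T=X_j)$. The Möbius transform of $\phi$ is $m_\phi(A)=\sum_{B\subseteq A}(-1)^{|A|-|B|}\phi(B)$. For $j\in[n]$ and $A\subseteq[n]\setminus\{j\}$, $r_j(A)=\Pr\big(X_j<\min_{i\in A}X_i\big)$ (empty min $=+\infty$). *)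

theory Defs
  imports "HOL-Probability.Probability"
begin

text \<open>Component index set [n] = {1..n}. Structure functions are Boolean-valued
  functions on subsets of [n]; they are identified with {0,1}-valued functions via of_bool.\<close>

definition semicoherent :: "nat \<Rightarrow> (nat set \<Rightarrow> bool) \<Rightarrow> bool" where
  "semicoherent n phi \<longleftrightarrow>
     (\<forall>A B. A \<subseteq> B \<and> B \<subseteq> {1..n} \<and> phi A \<longrightarrow> phi B) \<and>
     \<not> phi {} \<and> phi {1..n}"

definition mobius :: "(nat set \<Rightarrow> bool) \<Rightarrow> nat set \<Rightarrow> real" where
  "mobius phi A = (\<Sum>B\<in>Pow A. (-1::real) ^ (card A - card B) * of_bool (phi B))"

definition sys_lifetime :: "nat \<Rightarrow> (nat set \<Rightarrow> bool) \<Rightarrow> (nat \<Rightarrow> 'a \<Rightarrow> real) \<Rightarrow> 'a \<Rightarrow> real" where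
  "sys_lifetime n phi X \<omega> = Inf {t. 0 \<le> t \<and> \<not> phi {i\<in>{1..n}. X i \<omega> > t}}"

definition I_BP :: "'a measure \<Rightarrow> nat \<Rightarrow> (nat set \<Rightarrow> bool) \<Rightarrow> (nat \<Rightarrow> 'a \<Rightarrow> real) \<Rightarrow> nat \<Rightarrow> real" where
  "I_BP M n phi X j = measure M {\<omega>\<in>space M. sys_lifetime n phi X \<omega> = X j \<omega>}"

text \<open>r_j(A) = Pr(X_j < min_{i\<in>A} X_i), empty min = +\<infinity>.\<close>
definition r_prob :: "'a measure \<Rightarrow> (nat \<Rightarrow> 'a \<Rightarrow> real) \<Rightarrow> nat \<Rightarrow> nat set \<Rightarrow> real" where
  "r_prob M X j A = measure M {\<omega>\<in>space M. \<forall>i\<in>A. X j \<omega> < X i \<omega>}"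

end

theory Submission
  imports Defs
begin

(* Let B_j be the random set of components (other than j) that outlive component j, and
   p(C) = Pr(B_j = C).  The proof combines three facts:
   (1) deterministic: when lifetimes are nonnegative and distinct, T = X_j holds iff B_j is
       a critical set for j, i.e. phi(B_j u {j}) and not phi(B_j)  (lifetime_eq_iff); hence,
       ties being null events, I_BP(j) = sum of p(C) over the critical sets C;
   (2) r_j(A) = Pr(A <= B_j) = sum of p(C) over the supersets C of A;
   (3) combinatorial: by Moebius inversion, sum_A r_j(A) m_phi(A u {j}) equals the sum over C
       of p(C) (phi(C u {j}) - phi(C)), and by monotonicity the bracket is the indicator of
       C being critical. *)

lemma neg_one_power_diff:
  assumes "k \<le> n"
  shows "(-1::'a::ring_1) ^ n * (-1) ^ (n - k) = (-1) ^ k"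
proof -
  obtain d where n: "n = k + d" using assms le_Suc_ex by blast
  have "(-1::'a) ^ d * (-1) ^ d = 1" by (simp flip: power_add)
  then show ?thesis by (simp add: n power_add mult.assoc)
qed

(* Derived from the library's involutive inclusion-exclusion formula applied to
   the signed transform (-1)^|A| m_phi(A). *)
lemma mobius_inversion:
  assumes "finite C"
  shows "(\<Sum>A\<in>Pow C. mobius f A) = of_bool (f C)"
proof -
  define g :: "nat set \<Rightarrow> real" where "g A = (-1) ^ card A * mobius f A" for A
  have g_alt: "g A = (\<Sum>B\<in>Pow A. (-1) ^ card B * of_bool (f B))" if "finite A" for A
    unfolding g_def mobius_def sum_distrib_left
  proof (intro sum.cong refl)
    fix B assume "B \<in> Pow A"
    then have le: "card B \<le> card A" using card_mono[OF \<open>finite A\<close>] by blast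
    show "(-1::real) ^ card A * ((-1) ^ (card A - card B) * of_bool (f B))
             = (-1) ^ card B * of_bool (f B)"
      by (subst mult.assoc[symmetric], subst neg_one_power_diff[OF le]) (rule refl)
  qed
  have "of_bool (f C) = (\<Sum>A\<in>Pow C. (-1) ^ card A * g A)"
    by (rule inclusion_exclusion_symmetric[OF g_alt assms])
  also have "\<dots> = (\<Sum>A\<in>Pow C. mobius f A)"
    unfolding g_def mult.assoc[symmetric] power_add[symmetric] by simp
  finally show ?thesis ..
qed

lemma mobius_sum_insert:
  assumes "finite C" "j \<notin> C"
  shows "(\<Sum>A\<in>Pow C. mobius f (insert j A)) = of_bool (f (insert j C)) - of_bool (f C)"
proof -
  have "of_bool (f (insert j C)) = (\<Sum>A\<in>Pow C. mobius f A) + (\<Sum>A\<in>insert j ` Pow C. mobius f A)"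
    using assms unfolding Pow_insert mobius_inversion[symmetric, OF finite_insert[THEN iffD2, OF \<open>finite C\<close>]]
    by (subst sum.union_disjoint) auto
  also have "(\<Sum>A\<in>insert j ` Pow C. mobius f A) = (\<Sum>A\<in>Pow C. mobius f (insert j A))"
    using assms by (intro sum.reindex_cong[where l = "insert j"]) (auto simp: inj_on_def)
  finally show ?thesis
    using mobius_inversion[OF \<open>finite C\<close>] by simp
qed

lemma mobius_upper_sums:
  fixes p :: "nat set \<Rightarrow> real"
  assumes "finite U" "j \<notin> U"
  shows "(\<Sum>A\<in>Pow U. (\<Sum>C\<in>{C\<in>Pow U. A \<subseteq> C}. p C) * mobius f (insert j A))
       = (\<Sum>C\<in>Pow U. p C * (of_bool (f (insert j C)) - of_bool (f C)))"
proof -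
  have "(\<Sum>A\<in>Pow U. (\<Sum>C\<in>{C\<in>Pow U. A \<subseteq> C}. p C) * mobius f (insert j A))
      = (\<Sum>A\<in>Pow U. \<Sum>C\<in>{C\<in>Pow U. A \<subseteq> C}. p C * mobius f (insert j A))"
    by (simp add: sum_distrib_right)
  also have "\<dots> = (\<Sum>C\<in>Pow U. \<Sum>A\<in>{A\<in>Pow U. A \<subseteq> C}. p C * mobius f (insert j A))"
    using assms by (intro sum.swap_restrict) auto
  also have "\<dots> = (\<Sum>C\<in>Pow U. p C * (\<Sum>A\<in>Pow C. mobius f (insert j A)))"
    by (intro sum.cong refl) (auto simp: sum_distrib_left intro: sum.cong)
  also have "\<dots> = (\<Sum>C\<in>Pow U. p C * (of_bool (f (insert j C)) - of_bool (f C)))"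
  proof (intro sum.cong refl)
    fix C assume "C \<in> Pow U"
    then have "finite C" "j \<notin> C" using assms finite_subset by auto
    then show "p C * (\<Sum>A\<in>Pow C. mobius f (insert j A)) = p C * (of_bool (f (insert j C)) - of_bool (f C))"
      by (simp add: mobius_sum_insert)
  qed
  finally show ?thesis .
qed

definition working :: "nat \<Rightarrow> (nat \<Rightarrow> real) \<Rightarrow> real \<Rightarrow> nat set" where
  "working n x t = {i\<in>{1..n}. t < x i}"

definition lifetime :: "nat \<Rightarrow> (nat set \<Rightarrow> bool) \<Rightarrow> (nat \<Rightarrow> real) \<Rightarrow> real" where
  "lifetime n phi x = Inf {t. 0 \<le> t \<and> \<not> phi (working n x t)}"

lemma sys_lifetime_eq_lifetime: "sys_lifetime n phi X \<omega> = lifetime n phi (\<lambda>i. X i \<omega>)"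
  unfolding sys_lifetime_def lifetime_def working_def ..

lemma semicoherent_mono: "semicoherent n phi \<Longrightarrow> A \<subseteq> B \<Longrightarrow> B \<subseteq> {1..n} \<Longrightarrow> phi A \<Longrightarrow> phi B"
  unfolding semicoherent_def by blast

lemma working_subset: "working n x t \<subseteq> {1..n}"
  unfolding working_def by auto

lemma working_antimono: "s \<le> t \<Longrightarrow> working n x t \<subseteq> working n x s"
  unfolding working_def by auto

lemma working_right_const:
  obtains d :: real where "d > 0" "\<And>s. t \<le> s \<Longrightarrow> s < t + d \<Longrightarrow> working n x s = working n x t"
proof
  define d where "d = Min (insert 1 ((\<lambda>i. x i - t) ` working n x t))"
  have fin: "finite (working n x t)" unfolding working_def by simp
  show "d > 0" unfolding d_def using fin by (auto simp: working_def)
  fix s assume "t \<le> s" "s < t + d"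
  moreover have "d \<le> x i - t" if "i \<in> working n x t" for i
    unfolding d_def using fin that by (intro Min_le) auto
  ultimately show "working n x s = working n x t"
    by (force simp: working_def)
qed

lemma working_left_limit:
  assumes "0 < t"
  obtains s where "0 \<le> s" "s < t" "working n x s = {i\<in>{1..n}. t \<le> x i}"
proof
  define s where "s = Max (insert 0 {x i |i. i \<in> {1..n} \<and> x i < t})"
  have fin: "finite (insert 0 {x i |i. i \<in> {1..n} \<and> x i < t})" by simp
  show "0 \<le> s" unfolding s_def using fin by (intro Max_ge) auto
  show "s < t" unfolding s_def using fin assms by (subst Max_less_iff) auto
  have "x i \<le> s" if "i \<in> {1..n}" "x i < t" for i
    unfolding s_def using fin that by (intro Max_ge) auto
  with \<open>s < t\<close> show "working n x s = {i\<in>{1..n}. t \<le> x i}"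
    by (force simp: working_def)
qed

(* This uses right-continuity of the working set and the existence of a failure time
   (once every component has failed, phi({}) = False). *)
lemma lifetime_failed:
  assumes sc: "semicoherent n phi"
  shows "0 \<le> lifetime n phi x" "\<not> phi (working n x (lifetime n phi x))"
proof -
  define F where "F = {t. 0 \<le> t \<and> \<not> phi (working n x t)}"
  define T where "T = lifetime n phi x"
  have T: "T = Inf F" unfolding T_def F_def lifetime_def ..
  define m where "m = max 0 (Max (x ` {1..n}))"
  have "working n x m = {}"
    unfolding m_def working_def by (auto simp: not_less intro: max.coboundedI2)
  then have "m \<in> F" using sc unfolding F_def m_def semicoherent_def by simp
  have bdd: "bdd_below F" unfolding F_def by (rule bdd_belowI[of _ 0]) auto
  have "0 \<le> T" unfolding T using \<open>m \<in> F\<close> by (intro cInf_greatest) (auto simp: F_def)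
  moreover have "\<not> phi (working n x T)"
  proof
    assume works: "phi (working n x T)"
    obtain d :: real where "d > 0" and const: "\<And>s. T \<le> s \<Longrightarrow> s < T + d \<Longrightarrow> working n x s = working n x T"
      using working_right_const[where t = T and n = n and x = x] by metis
    then have "Inf F < T + d" using T by simp
    then obtain t where t: "t \<in> F" "t < T + d"
      using \<open>m \<in> F\<close> bdd by (subst (asm) cInf_less_iff) auto
    have "T \<le> t" unfolding T using t bdd by (intro cInf_lower)
    then have "working n x t = working n x T" using const t(2) by blast
    with t(1) works show False unfolding F_def by simp
  qed
  ultimately show "0 \<le> lifetime n phi x" "\<not> phi (working n x (lifetime n phi x))"
    unfolding T_def by auto
qed

(* Since failure is permanent (monotonicity of phi), T <= s exactly when the system is
   failed at time s. *)
lemma lifetime_le_iff: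
  assumes sc: "semicoherent n phi"
  shows "lifetime n phi x \<le> s \<longleftrightarrow> 0 \<le> s \<and> \<not> phi (working n x s)"
proof
  assume le: "lifetime n phi x \<le> s"
  show "0 \<le> s \<and> \<not> phi (working n x s)"
  proof
    show "0 \<le> s" using le lifetime_failed(1)[OF sc, where x = x] by linarith
    show "\<not> phi (working n x s)"
      using lifetime_failed(2)[OF sc, where x = x]
        semicoherent_mono[OF sc working_antimono[OF le] working_subset] by blast
  qed
next
  assume "0 \<le> s \<and> \<not> phi (working n x s)"
  then show "lifetime n phi x \<le> s"
    unfolding lifetime_def by (intro cInf_lower) (auto intro: bdd_belowI[of _ 0])
qed

lemma lifetime_eq_iff:
  assumes sc: "semicoherent n phi" and j: "j \<in> {1..n}"
    and nonneg: "\<And>i. i \<in> {1..n} \<Longrightarrow> 0 \<le> x i"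
    and no_ties: "\<And>i k. i \<in> {1..n} \<Longrightarrow> k \<in> {1..n} \<Longrightarrow> i \<noteq> k \<Longrightarrow> x i \<noteq> x k"
  defines "B \<equiv> {i\<in>{1..n} - {j}. x j < x i}"
  shows "lifetime n phi x = x j \<longleftrightarrow> phi (insert j B) \<and> \<not> phi B"
proof -
  define T where "T = lifetime n phi x"
  have working_at_j: "working n x (x j) = B"
    unfolding working_def B_def by auto
  have not_before_j: "{i\<in>{1..n}. x j \<le> x i} = insert j B"
    using j no_ties unfolding B_def by (force simp: order.order_iff_strict)
  have "T \<le> x j \<longleftrightarrow> \<not> phi B"
    unfolding T_def lifetime_le_iff[OF sc] working_at_j using nonneg[OF j] by simp
  moreover have "x j \<le> T \<longleftrightarrow> phi (insert j B)"
  proof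
    assume "x j \<le> T"
    show "phi (insert j B)"
    proof (cases "x j = 0")
      case True
      then have "{i\<in>{1..n}. x j \<le> x i} = {1..n}" using nonneg by auto
      then have "insert j B = {1..n}" using not_before_j by simp
      then show ?thesis using sc unfolding semicoherent_def by simp
    next
      case False
      then obtain s where "0 \<le> s" "s < x j" and working_s: "working n x s = insert j B"
        using nonneg[OF j] not_before_j working_left_limit[of "x j" n x] by force
      then have "\<not> T \<le> s" using \<open>x j \<le> T\<close> by simp
      then show ?thesis
        unfolding T_def lifetime_le_iff[OF sc] working_s using \<open>0 \<le> s\<close> by simp
    qed
  next
    assume works: "phi (insert j B)"
    show "x j \<le> T"
    proof (rule ccontr)
      assume "\<not> x j \<le> T"
      have "insert j B \<subseteq> working n x T"
      proof
        fix i assume "i \<in> insert j B"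
        then have "i \<in> {1..n}" "x j \<le> x i" unfolding not_before_j[symmetric] by simp_all
        with \<open>\<not> x j \<le> T\<close> show "i \<in> working n x T" unfolding working_def by simp
      qed
      then have "phi (working n x T)"
        using semicoherent_mono[OF sc _ working_subset works] by blast
      then show False using lifetime_failed(2)[OF sc] unfolding T_def by blast
    qed
  qed
  ultimately show ?thesis unfolding T_def[symmetric] by linarith
qed

lemma measurable_random_subset:
  assumes "finite I" and Q: "\<And>i. i \<in> I \<Longrightarrow> {\<omega>\<in>space M. Q i \<omega>} \<in> sets M"
  shows "(\<lambda>\<omega>. {i\<in>I. Q i \<omega>}) \<in> M \<rightarrow>\<^sub>M count_space (Pow I)"
proof -
  have "{\<omega>\<in>space M. \<forall>i\<in>I. Q i \<omega> \<longleftrightarrow> i \<in> D} \<in> sets M" for D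
    using assms unfolding pred_def[symmetric] by (intro pred_intros_finite pred_intros_logic) auto
  moreover have "(\<lambda>\<omega>. {i\<in>I. Q i \<omega>}) -` {D} \<inter> space M = {\<omega>\<in>space M. \<forall>i\<in>I. Q i \<omega> \<longleftrightarrow> i \<in> D}"
    if "D \<subseteq> I" for D
    using that by auto
  ultimately show ?thesis
    using \<open>finite I\<close> by (subst measurable_count_space_eq2) auto
qed

lemma (in finite_measure) measure_random_subset_sum:
  assumes f: "f \<in> M \<rightarrow>\<^sub>M count_space S" and "finite S" "K \<subseteq> S"
  shows "measure M {\<omega>\<in>space M. f \<omega> \<in> K} = (\<Sum>C\<in>K. measure M {\<omega>\<in>space M. f \<omega> = C})"
proof -
  let ?N = "distr M (count_space S) f"
  interpret N: finite_measure ?N by (rule finite_measure_distr[OF f])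
  have preimage: "measure ?N L = measure M {\<omega>\<in>space M. f \<omega> \<in> L}" if "L \<subseteq> S" for L
    using that f by (subst measure_distr) (auto intro: arg_cong[where f = "measure M"])
  have "measure M {\<omega>\<in>space M. f \<omega> \<in> K} = measure ?N K"
    using preimage[OF \<open>K \<subseteq> S\<close>] ..
  also have "\<dots> = (\<Sum>C\<in>K. measure ?N {C})"
    using assms by (intro N.finite_measure_eq_sum_singleton) (auto intro: finite_subset)
  also have "\<dots> = (\<Sum>C\<in>K. measure M {\<omega>\<in>space M. f \<omega> = C})"
    using preimage \<open>K \<subseteq> S\<close> by (intro sum.cong) auto
  finally show ?thesis .
qed

definition critical_sets :: "nat \<Rightarrow> (nat set \<Rightarrow> bool) \<Rightarrow> nat \<Rightarrow> nat set set" where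
  "critical_sets n phi j = {C\<in>Pow ({1..n} - {j}). phi (insert j C) \<and> \<not> phi C}"

lemma marginal_gain_indicator:
  assumes sc: "semicoherent n phi" and "j \<in> {1..n}" "C \<subseteq> {1..n} - {j}"
  shows "of_bool (phi (insert j C)) - of_bool (phi C) = (of_bool (C \<in> critical_sets n phi j) :: real)"
  using semicoherent_mono[OF sc, of C "insert j C"] assms by (auto simp: critical_sets_def)

definition survivors :: "nat \<Rightarrow> (nat \<Rightarrow> 'a \<Rightarrow> real) \<Rightarrow> nat \<Rightarrow> 'a \<Rightarrow> nat set" where
  "survivors n X j \<omega> = {i\<in>{1..n} - {j}. X j \<omega> < X i \<omega>}"

locale semicoherent_system = prob_space M for M :: "'a measure" +
  fixes n :: nat and phi :: "nat set \<Rightarrow> bool" and X :: "nat \<Rightarrow> 'a \<Rightarrow> real"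
  assumes semicoherent: "semicoherent n phi"
    and lifetime_measurable: "\<And>i. i \<in> {1..n} \<Longrightarrow> X i \<in> borel_measurable M"
    and lifetime_nonneg: "\<And>i \<omega>. i \<in> {1..n} \<Longrightarrow> \<omega> \<in> space M \<Longrightarrow> 0 \<le> X i \<omega>"
    and no_ties: "\<And>i k. i \<in> {1..n} \<Longrightarrow> k \<in> {1..n} \<Longrightarrow> i \<noteq> k \<Longrightarrow>
           measure M {\<omega>\<in>space M. X i \<omega> = X k \<omega>} = 0"
begin

lemma survivors_measurable:
  assumes "j \<in> {1..n}"
  shows "survivors n X j \<in> M \<rightarrow>\<^sub>M count_space (Pow ({1..n} - {j}))"
  unfolding survivors_def[abs_def]
  using assms by (intro measurable_random_subset borel_measurable_less lifetime_measurable) auto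

lemma sys_lifetime_measurable: "sys_lifetime n phi X \<in> borel_measurable M"
proof (rule borel_measurableI_le)
  fix s
  have working_meas: "(\<lambda>\<omega>. working n (\<lambda>i. X i \<omega>) s) \<in> M \<rightarrow>\<^sub>M count_space (Pow {1..n})"
    unfolding working_def
    by (intro measurable_random_subset borel_measurable_less borel_measurable_const lifetime_measurable) auto
  have "{\<omega>\<in>space M. 0 \<le> s \<and> \<not> phi (working n (\<lambda>i. X i \<omega>) s)} \<in> sets M"
    by (rule measurable_sets_Collect[OF working_meas]) auto
  then show "{\<omega>\<in>space M. sys_lifetime n phi X \<omega> \<le> s} \<in> sets M"
    unfolding sys_lifetime_eq_lifetime lifetime_le_iff[OF semicoherent] .
qed

lemma AE_no_ties: "AE \<omega> in M. \<forall>i\<in>{1..n}. \<forall>k\<in>{1..n}. i \<noteq> k \<longrightarrow> X i \<omega> \<noteq> X k \<omega>"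
proof (intro AE_finite_allI finite_atLeastAtMost)
  fix i k assume ik: "i \<in> {1..n}" "k \<in> {1..n}"
  let ?N = "{\<omega>\<in>space M. X i \<omega> = X k \<omega>}"
  have "?N \<in> sets M" using lifetime_measurable ik by (intro borel_measurable_eq) auto
  moreover have "i \<noteq> k \<Longrightarrow> measure M ?N = 0" using no_ties ik by blast
  ultimately have "i \<noteq> k \<Longrightarrow> ?N \<in> null_sets M" by (simp add: emeasure_eq_measure null_setsI)
  then show "AE \<omega> in M. i \<noteq> k \<longrightarrow> X i \<omega> \<noteq> X k \<omega>"
    by (cases "i = k") (auto intro: AE_I')
qed

(* Barlow-Proschan importance as the probability that the survivor set of j is critical:
   the two events agree outside the null set of ties, by lifetime_eq_iff. *)
lemma I_BP_eq_critical:
  assumes j: "j \<in> {1..n}"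
  shows "I_BP M n phi X j = (\<Sum>C\<in>critical_sets n phi j. prob {\<omega>\<in>space M. survivors n X j \<omega> = C})"
proof -
  let ?E = "{\<omega>\<in>space M. sys_lifetime n phi X \<omega> = X j \<omega>}"
  let ?E' = "{\<omega>\<in>space M. survivors n X j \<omega> \<in> critical_sets n phi j}"
  have "AE \<omega> in M. \<omega> \<in> ?E \<longleftrightarrow> \<omega> \<in> ?E'"
    using AE_no_ties
  proof (rule AE_mp, intro AE_I2 impI)
    fix \<omega> assume \<omega>: "\<omega> \<in> space M"
      and distinct: "\<forall>i\<in>{1..n}. \<forall>k\<in>{1..n}. i \<noteq> k \<longrightarrow> X i \<omega> \<noteq> X k \<omega>"
    have "lifetime n phi (\<lambda>i. X i \<omega>) = X j \<omega> \<longleftrightarrow>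
          phi (insert j (survivors n X j \<omega>)) \<and> \<not> phi (survivors n X j \<omega>)"
      unfolding survivors_def
      by (rule lifetime_eq_iff[OF semicoherent j]) (use lifetime_nonneg[OF _ \<omega>] distinct in auto)
    then show "\<omega> \<in> ?E \<longleftrightarrow> \<omega> \<in> ?E'"
      using \<omega> by (auto simp: sys_lifetime_eq_lifetime critical_sets_def survivors_def)
  qed
  moreover have "?E \<in> sets M"
    using sys_lifetime_measurable lifetime_measurable[OF j] by (rule borel_measurable_eq)
  moreover have "?E' \<in> sets M"
    by (rule measurable_sets_Collect[OF survivors_measurable[OF j]]) auto
  ultimately have "I_BP M n phi X j = prob ?E'"
    unfolding I_BP_def by (rule measure_eq_AE)
  also have "\<dots> = (\<Sum>C\<in>critical_sets n phi j. prob {\<omega>\<in>space M. survivors n X j \<omega> = C})"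
    by (rule measure_random_subset_sum[OF survivors_measurable[OF j]]) (auto simp: critical_sets_def)
  finally show ?thesis .
qed

lemma r_prob_eq_upper_sum:
  assumes j: "j \<in> {1..n}" and A: "A \<subseteq> {1..n} - {j}"
  shows "r_prob M X j A =
    (\<Sum>C\<in>{C\<in>Pow ({1..n} - {j}). A \<subseteq> C}. prob {\<omega>\<in>space M. survivors n X j \<omega> = C})"
proof -
  have "{\<omega>\<in>space M. \<forall>i\<in>A. X j \<omega> < X i \<omega>}
      = {\<omega>\<in>space M. survivors n X j \<omega> \<in> {C\<in>Pow ({1..n} - {j}). A \<subseteq> C}}"
    using A unfolding survivors_def by auto
  then show ?thesis
    unfolding r_prob_def
    by (simp only:) (rule measure_random_subset_sum[OF survivors_measurable[OF j]], auto)
qed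

end

theorem corollary6:
  fixes M :: "'a measure" and n :: nat and phi :: "nat set \<Rightarrow> bool"
    and X :: "nat \<Rightarrow> 'a \<Rightarrow> real" and j :: nat
  assumes "prob_space M"
    and "semicoherent n phi"
    and "\<And>i. i \<in> {1..n} \<Longrightarrow> X i \<in> borel_measurable M"
    and "\<And>i \<omega>. i \<in> {1..n} \<Longrightarrow> \<omega> \<in> space M \<Longrightarrow> 0 \<le> X i \<omega>"
    and "\<And>i k. i \<in> {1..n} \<Longrightarrow> k \<in> {1..n} \<Longrightarrow> i \<noteq> k \<Longrightarrow>
           measure M {\<omega>\<in>space M. X i \<omega> = X k \<omega>} = 0"
    and "j \<in> {1..n}"
  shows "I_BP M n phi X j =
           (\<Sum>A\<in>Pow ({1..n} - {j}). r_prob M X j A * mobius phi (insert j A))"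
proof -
  interpret semicoherent_system M n phi X
    using assms(1-5) by (intro semicoherent_system.intro semicoherent_system_axioms.intro) auto
  note j = \<open>j \<in> {1..n}\<close>
  define U where "U = {1..n} - {j}"
  have critical_subsets: "critical_sets n phi j \<subseteq> Pow U"
    unfolding critical_sets_def U_def by auto
  define p where "p C = prob {\<omega>\<in>space M. survivors n X j \<omega> = C}" for C
  have "(\<Sum>A\<in>Pow U. r_prob M X j A * mobius phi (insert j A))
      = (\<Sum>A\<in>Pow U. (\<Sum>C\<in>{C\<in>Pow U. A \<subseteq> C}. p C) * mobius phi (insert j A))"
    using r_prob_eq_upper_sum[OF j] by (intro sum.cong) (auto simp: U_def p_def)
  also have "\<dots> = (\<Sum>C\<in>Pow U. p C * (of_bool (phi (insert j C)) - of_bool (phi C)))"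
    by (rule mobius_upper_sums) (auto simp: U_def)
  also have "\<dots> = (\<Sum>C\<in>Pow U. if C \<in> critical_sets n phi j then p C else 0)"
    using marginal_gain_indicator[OF semicoherent j] by (intro sum.cong) (auto simp: U_def)
  also have "\<dots> = (\<Sum>C\<in>critical_sets n phi j. p C)"
    using sum.inter_restrict[of "Pow U" p "critical_sets n phi j"] critical_subsets
    by (simp add: U_def Int_absorb1)
  also have "\<dots> = I_BP M n phi X j"
    using I_BP_eq_critical[OF j] by (simp add: p_def)
  finally show ?thesis unfolding U_def ..
qed

end
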